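(* If $x\in\Gamma_s$, then for all $i,j,k,l$ in the same connected component of $G_x$ such that $x_{ij}>0$ and $x_{kl}>0$, we have $a_{ij}p_{ij}=a_{kl}p_{kl}$.
   Context: Let $G=(\mathbb{V},E)$ be a finite graph with adjacency $\sim$ and edge set $E$. Let $a_{ij}=a_{ji}\ge0$ ($>0$ only if $i\sim j$) and $p_{ij}=p_{ji}\in[0,1]$ ($=0$ if $i\not\sim j$), with some $a_{ij}p_{ij}>0$. Fix $h_1\in(0,1]$; $\Delta$ is the set of arrays $x=(x_{ij})$ with $x_{ij}=x_{ji}\ge0$, $x_{ij}=0$ if $i\not\sim j$, $\sum_{i,j}x_{ij}=1$, $\sum_{(i,j):a_{ij}p_{ij}>0}x_{ij}\ge h_1$; $x_i=\sum_jx_{ij}$. $\partial\Delta$: the $x\in\Delta$ for which some vertex $i$ having a neighbour $j$ with $a_{ij}p_{ij}>0$ has $\sum_{j:a_{ij}p_{ij}>0}x_{ij}=0$. $H(x)=\sum_{(i,j):x_{ij}>0}a_{ij}p_{ij}x_{ij}^2/(x_ix_j)$; $y_{ij}=a_{ij}p_{ij}x_{ij}/(x_ix_j)$ ($0$ if $a_{ij}p_{ij}=0$); $F(x)_{ij}=x_{ij}(y_{ij}-H(x))$ ($0$ if $x_{ij}=0$); $\Gamma=\{x\in\Delta:F(x)=0\}$, $\Gamma_0=\Gamma\cap(\Delta\setminus\partial\Delta)$. For $x\in\Gamma_0$, $J(x)$ is the Jacobian (indexed by pairs of edges) of $(x_e)_{e\in E}\mapsto(F_e(x))_{e\in E}$,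 with $x_{ij}=x_{ji}=x_e$ for $e=\{i,j\}$, $x_i=\sum_jx_{ij}$, the formulas for $H$ (terms with $a_{ij}p_{ij}>0$) and $F$ regarded as smooth functions of the unconstrained variables near $x$. $\Gamma_s$ is the set of $x\in\Gamma_0$ such that all eigenvalues of $J(x)$ have nonpositive real part (linearly stable equilibria). $G_x$ is the subgraph with vertex set $\mathbb{V}$ and $i,j$ adjacent iff $x_{ij}>0$. *)

theory Defs
  imports "HOL-Analysis.Analysis"
begin

definition edges :: "('v \<Rightarrow> 'v \<Rightarrow> bool) \<Rightarrow> 'v set set" where
  "edges adj = {{i, j} | i j. adj i j}"

definition vsum :: "('v::finite \<Rightarrow> 'v \<Rightarrow> real) \<Rightarrow> 'v \<Rightarrow> real" where
  "vsum x i = (\<Sum>j\<in>UNIV. x i j)"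

definition in_Delta ::
  "('v::finite \<Rightarrow> 'v \<Rightarrow> bool) \<Rightarrow> ('v \<Rightarrow> 'v \<Rightarrow> real) \<Rightarrow> ('v \<Rightarrow> 'v \<Rightarrow> real) \<Rightarrow> real
   \<Rightarrow> ('v \<Rightarrow> 'v \<Rightarrow> real) \<Rightarrow> bool" where
  "in_Delta adj a p h1 x \<longleftrightarrow>
     (\<forall>i j. x i j = x j i) \<and> (\<forall>i j. x i j \<ge> 0) \<and> (\<forall>i j. \<not> adj i j \<longrightarrow> x i j = 0) \<and>
     (\<Sum>i\<in>UNIV. \<Sum>j\<in>UNIV. x i j) = 1 \<and>
     (\<Sum>(i,j)\<in>{(i,j). a i j * p i j > 0}. x i j) \<ge> h1"

definition in_bdry ::
  "('v::finite \<Rightarrow> 'v \<Rightarrow> bool) \<Rightarrow> ('v \<Rightarrow> 'v \<Rightarrow> real) \<Rightarrow> ('v \<Rightarrow> 'v \<Rightarrow> real) \<Rightarrow> real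
   \<Rightarrow> ('v \<Rightarrow> 'v \<Rightarrow> real) \<Rightarrow> bool" where
  "in_bdry adj a p h1 x \<longleftrightarrow> in_Delta adj a p h1 x \<and>
     (\<exists>i. (\<exists>j. adj i j \<and> a i j * p i j > 0) \<and> (\<Sum>j\<in>{j. a i j * p i j > 0}. x i j) = 0)"

definition Hf :: "('v::finite \<Rightarrow> 'v \<Rightarrow> real) \<Rightarrow> ('v \<Rightarrow> 'v \<Rightarrow> real) \<Rightarrow> ('v \<Rightarrow> 'v \<Rightarrow> real) \<Rightarrow> real" where
  "Hf a p x = (\<Sum>(i,j)\<in>{(i,j). x i j > 0}. a i j * p i j * (x i j)^2 / (vsum x i * vsum x j))"

definition yf :: "('v::finite \<Rightarrow> 'v \<Rightarrow> real) \<Rightarrow> ('v \<Rightarrow> 'v \<Rightarrow> real) \<Rightarrow> ('v \<Rightarrow> 'v \<Rightarrow> real) \<Rightarrow> 'v \<Rightarrow> 'v \<Rightarrow> real" where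
  "yf a p x i j = (if a i j * p i j = 0 then 0 else a i j * p i j * x i j / (vsum x i * vsum x j))"

definition Ff :: "('v::finite \<Rightarrow> 'v \<Rightarrow> real) \<Rightarrow> ('v \<Rightarrow> 'v \<Rightarrow> real) \<Rightarrow> ('v \<Rightarrow> 'v \<Rightarrow> real) \<Rightarrow> 'v \<Rightarrow> 'v \<Rightarrow> real" where
  "Ff a p x i j = (if x i j = 0 then 0 else x i j * (yf a p x i j - Hf a p x))"

text \<open>Smooth formulas used for the Jacobian (H sums over pairs with a_ij p_ij > 0).\<close>

definition Hs :: "('v::finite \<Rightarrow> 'v \<Rightarrow> real) \<Rightarrow> ('v \<Rightarrow> 'v \<Rightarrow> real) \<Rightarrow> ('v \<Rightarrow> 'v \<Rightarrow> real) \<Rightarrow> real" where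
  "Hs a p x = (\<Sum>(i,j)\<in>{(i,j). a i j * p i j > 0}. a i j * p i j * (x i j)^2 / (vsum x i * vsum x j))"

definition Fs :: "('v::finite \<Rightarrow> 'v \<Rightarrow> real) \<Rightarrow> ('v \<Rightarrow> 'v \<Rightarrow> real) \<Rightarrow> ('v \<Rightarrow> 'v \<Rightarrow> real) \<Rightarrow> 'v \<Rightarrow> 'v \<Rightarrow> real" where
  "Fs a p x i j = x i j * (yf a p x i j - Hs a p x)"

definition pert :: "('v \<Rightarrow> 'v \<Rightarrow> real) \<Rightarrow> 'v set \<Rightarrow> real \<Rightarrow> 'v \<Rightarrow> 'v \<Rightarrow> real" where
  "pert x f t = (\<lambda>i j. x i j + (if {i, j} = f then t else 0))"

definition edge_rep :: "('v \<Rightarrow> 'v \<Rightarrow> bool) \<Rightarrow> 'v set \<Rightarrow> 'v \<times> 'v" where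
  "edge_rep adj e = (SOME (i, j). adj i j \<and> e = {i, j})"

text \<open>Jacobian entry J(x)_{e,f} = dF_e / dx_f.\<close>

definition Jac :: "('v::finite \<Rightarrow> 'v \<Rightarrow> bool) \<Rightarrow> ('v \<Rightarrow> 'v \<Rightarrow> real) \<Rightarrow> ('v \<Rightarrow> 'v \<Rightarrow> real)
   \<Rightarrow> ('v \<Rightarrow> 'v \<Rightarrow> real) \<Rightarrow> 'v set \<Rightarrow> 'v set \<Rightarrow> real" where
  "Jac adj a p x e f = deriv (\<lambda>t. Fs a p (pert x f t) (fst (edge_rep adj e)) (snd (edge_rep adj e))) 0"

definition is_eigenvalue :: "'e set \<Rightarrow> ('e \<Rightarrow> 'e \<Rightarrow> real) \<Rightarrow> complex \<Rightarrow> bool" where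
  "is_eigenvalue E M \<mu> \<longleftrightarrow>
     (\<exists>v :: 'e \<Rightarrow> complex. (\<exists>e\<in>E. v e \<noteq> 0) \<and>
        (\<forall>e\<in>E. (\<Sum>f\<in>E. complex_of_real (M e f) * v f) = \<mu> * v e))"

definition in_Gamma0 ::
  "('v::finite \<Rightarrow> 'v \<Rightarrow> bool) \<Rightarrow> ('v \<Rightarrow> 'v \<Rightarrow> real) \<Rightarrow> ('v \<Rightarrow> 'v \<Rightarrow> real) \<Rightarrow> real
   \<Rightarrow> ('v \<Rightarrow> 'v \<Rightarrow> real) \<Rightarrow> bool" where
  "in_Gamma0 adj a p h1 x \<longleftrightarrow> in_Delta adj a p h1 x \<and> (\<forall>i j. Ff a p x i j = 0)
     \<and> \<not> in_bdry adj a p h1 x"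

definition in_Gammas ::
  "('v::finite \<Rightarrow> 'v \<Rightarrow> bool) \<Rightarrow> ('v \<Rightarrow> 'v \<Rightarrow> real) \<Rightarrow> ('v \<Rightarrow> 'v \<Rightarrow> real) \<Rightarrow> real
   \<Rightarrow> ('v \<Rightarrow> 'v \<Rightarrow> real) \<Rightarrow> bool" where
  "in_Gammas adj a p h1 x \<longleftrightarrow> in_Gamma0 adj a p h1 x \<and>
     (\<forall>\<mu>. is_eigenvalue (edges adj) (Jac adj a p x) \<mu> \<longrightarrow> Re \<mu> \<le> 0)"

definition Gx_conn :: "('v \<Rightarrow> 'v \<Rightarrow> real) \<Rightarrow> 'v \<Rightarrow> 'v \<Rightarrow> bool" where
  "Gx_conn x = (\<lambda>u v. x u v > 0)\<^sup>*\<^sup>*"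

end

theory Submission
  imports Defs
begin

text \<open>
  At an equilibrium with H > 0 every support edge satisfies a_ij p_ij x_ij = H x_i x_j, and
  H is stationary along every support edge. On vectors y supported on the edges of G_x the Jacobian
  therefore acts as H (I - M), where (M y)_ij = x_ij (Y_i / x_i + Y_j / x_j) and Y_u is the sum of y
  over the support edges at u. Let Q y = \<Sum>_u Y_u^2 / x_u and P y = \<Sum>_e y_e^2 / x_e: a minimiser
  of Q / P is an eigenvector of the Jacobian with eigenvalue H (1 - Q / P), so linear stability forces
  Q \<ge> P. Testing this with y = e_uw - e_uw' for two support edges at u shows that w is a leaf of G_x,
  i.e. x_w = x_uw. Hence if x_ij > 0 and x_jl > 0 with i \<noteq> l, both i and l are leaves at j and the
  equilibrium equation gives a_ij p_ij = H x_j = a_jl p_jl; induction along paths of G_x concludes.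
\<close>

lemma has_real_derivative_power_div_mult:
  fixes y \<alpha> u \<beta> w \<gamma> :: real and n :: nat
  assumes "y \<noteq> 0" "u \<noteq> 0" "w \<noteq> 0"
  shows "((\<lambda>t. (y + t * \<alpha>) ^ n / ((u + t * \<beta>) * (w + t * \<gamma>))) has_real_derivative
           y ^ n / (u * w) * (n * \<alpha> / y - \<beta> / u - \<gamma> / w)) (at 0)"
proof -
  have "((\<lambda>t. (y + t * \<alpha>) ^ n / ((u + t * \<beta>) * (w + t * \<gamma>))) has_real_derivative
     (n * y ^ (n - 1) * \<alpha> * (u * w) - y ^ n * (\<beta> * w + u * \<gamma>)) / (u * w)\<^sup>2) (at 0)"
    using assms by (auto intro!: derivative_eq_intros simp: power2_eq_square algebra_simps)
  moreover have "(n * y ^ (n - 1) * \<alpha> * (u * w) - y ^ n * (\<beta> * w + u * \<gamma>)) / (u * w)\<^sup>2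
      = y ^ n / (u * w) * (n * \<alpha> / y - \<beta> / u - \<gamma> / w)"
    using assms by (cases n) (simp_all add: field_simps power2_eq_square)
  ultimately show ?thesis by simp
qed

lemma linear_coeff_zero_if_quadratic_nonneg:
  fixes A B :: real
  assumes "\<And>t. t * A + t\<^sup>2 * B \<ge> 0"
  shows "A = 0"
proof (rule ccontr)
  assume "A \<noteq> 0"
  define s where "s = 1 / (\<bar>B\<bar> + 1)"
  have "s > 0" "s * B < 1"
    by (auto simp: s_def divide_simps)
  moreover have "(- s * A) * A + (- s * A)\<^sup>2 * B = - (s * A\<^sup>2) * (1 - s * B)"
    by (simp add: power2_eq_square algebra_simps)
  moreover have "s * A\<^sup>2 > 0" using \<open>A \<noteq> 0\<close> \<open>s > 0\<close> by simp
  ultimately have "(- s * A) * A + (- s * A)\<^sup>2 * B < 0"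
    by (simp add: mult_pos_pos)
  with assms show False by (metis not_le)
qed

definition edge_indicator :: "'v \<Rightarrow> 'v \<Rightarrow> 'v \<Rightarrow> 'v \<Rightarrow> real" where
  "edge_indicator k l u v = (if {u, v} = {k, l} then 1 else 0)"

definition endpoint_indicator :: "'v \<Rightarrow> 'v \<Rightarrow> 'v \<Rightarrow> real" where
  "endpoint_indicator k l u = (if u = k \<or> u = l then 1 else 0)"

lemma sum_edge_indicator:
  fixes k l :: "'v::finite"
  assumes "k \<noteq> l"
  shows "(\<Sum>w\<in>UNIV. edge_indicator k l u w) = endpoint_indicator k l u"
proof -
  have "{w. {u, w} = {k, l}} = (if u = k then {l} else if u = l then {k} else {})"
    using assms by (auto simp: doubleton_eq_iff)
  then show ?thesis by (simp add: edge_indicator_def endpoint_indicator_def sum.If_cases)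
qed

lemma sum_endpoint_indicator:
  fixes k l :: "'v::finite"
  assumes "k \<noteq> l"
  shows "(\<Sum>u\<in>UNIV. endpoint_indicator k l u) = 2"
  using assms by (simp add: endpoint_indicator_def sum.If_cases Collect_disj_eq)

lemma pert_zero [simp]: "pert x f 0 = x"
  by (simp add: pert_def)

lemma pert_doubleton: "pert x {k, l} t u v = x u v + t * edge_indicator k l u v"
  by (simp add: pert_def edge_indicator_def)

lemma vsum_pert_doubleton:
  assumes "k \<noteq> l"
  shows "vsum (pert x {k, l} t) u = vsum x u + t * endpoint_indicator k l u"
  using sum_edge_indicator[OF assms, of u]
  by (simp add: vsum_def pert_doubleton sum.distrib sum_distrib_left[symmetric])

lemma yf_if_ap_pos: "a i j * p i j > 0 \<Longrightarrow> yf a p x i j = a i j * p i j * x i j / (vsum x i * vsum x j)"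
  by (simp add: yf_def)

lemma edge_rep_eq:
  assumes "e \<in> edges adj" "edge_rep adj e = (i, j)"
  shows "e = {i, j}"
proof -
  have "\<exists>q. case q of (i, j) \<Rightarrow> adj i j \<and> e = {i, j}" using assms(1) by (auto simp: edges_def)
  then have "case edge_rep adj e of (i, j) \<Rightarrow> adj i j \<and> e = {i, j}"
    unfolding edge_rep_def by (rule someI_ex)
  then show ?thesis using assms(2) by simp
qed

section \<open>Equilibria and their Jacobian\<close>

locale edge_equilibrium =
  fixes adj :: "'v::finite \<Rightarrow> 'v \<Rightarrow> bool" and a p x :: "'v \<Rightarrow> 'v \<Rightarrow> real" and H :: real
  assumes x_sym: "\<And>i j. x i j = x j i" and x_nonneg: "\<And>i j. x i j \<ge> 0"
    and x_zero_if_not_adj: "\<And>i j. \<not> adj i j \<Longrightarrow> x i j = 0"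
    and adj_irrefl: "\<And>i. \<not> adj i i"
    and ap_sym: "\<And>i j. a i j * p i j = a j i * p j i"
    and H_pos: "H > 0" and Hf_eq: "Hf a p x = H"
    and equilibrium: "\<And>i j. x i j > 0 \<Longrightarrow>
      a i j * p i j > 0 \<and> a i j * p i j * x i j = H * vsum x i * vsum x j"
begin

lemma x_le_vsum: "x i j \<le> vsum x i"
  unfolding vsum_def by (rule member_le_sum) (auto simp: x_nonneg)

lemma vsum_pos_if_x_pos: "x i j > 0 \<Longrightarrow> vsum x i > 0 \<and> vsum x j > 0"
  using x_le_vsum[of i j] x_le_vsum[of j i] x_sym[of i j] by auto

lemma x_pos_imp_adj: "x i j > 0 \<Longrightarrow> adj i j"
  using x_zero_if_not_adj by force

lemma x_pos_imp_neq: "x i j > 0 \<Longrightarrow> i \<noteq> j"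
  using x_pos_imp_adj adj_irrefl by blast

lemma x_pos_if_edge_indicator: "x k l > 0 \<Longrightarrow> edge_indicator k l u v \<noteq> 0 \<Longrightarrow> x u v > 0"
  using x_sym by (auto simp: edge_indicator_def doubleton_eq_iff split: if_splits)

lemma Hs_eq: "Hs a p x = H"
proof -
  let ?f = "\<lambda>(i, j). a i j * p i j * (x i j)\<^sup>2 / (vsum x i * vsum x j)"
  have "Hs a p x = sum ?f {(i, j). a i j * p i j > 0}" by (simp add: Hs_def)
  also have "\<dots> = sum ?f {(i, j). x i j > 0}"
  proof (rule sum.mono_neutral_right)
    show "{(i, j). x i j > 0} \<subseteq> {(i, j). a i j * p i j > 0}" using equilibrium by auto
    show "\<forall>q\<in>{(i, j). a i j * p i j > 0} - {(i, j). x i j > 0}. ?f q = 0"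
      using x_nonneg by (force simp: le_less)
  qed auto
  also have "\<dots> = H" using Hf_eq by (simp add: Hf_def)
  finally show ?thesis .
qed

text \<open>The equilibrium equation turns the prefactor a_uv p_uv x_uv^n / (x_u x_v) into H x_uv^n / x_uv.\<close>

lemma monomial_pert_has_derivative:
  assumes uv: "x u v > 0" and kl: "x k l > 0"
  shows "((\<lambda>t. a u v * p u v * pert x {k, l} t u v ^ n /
            (vsum (pert x {k, l} t) u * vsum (pert x {k, l} t) v)) has_real_derivative
          H * x u v ^ n / x u v * (n * edge_indicator k l u v / x u v
            - endpoint_indicator k l u / vsum x u - endpoint_indicator k l v / vsum x v)) (at 0)"
proof -
  have "k \<noteq> l" using kl by (rule x_pos_imp_neq)
  have su: "vsum x u > 0" and sv: "vsum x v > 0" using vsum_pos_if_x_pos[OF uv] by auto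
  have eq: "a u v * p u v * x u v = H * vsum x u * vsum x v" using equilibrium[OF uv] by simp
  have fun_eq: "(\<lambda>t. a u v * p u v * pert x {k, l} t u v ^ n /
      (vsum (pert x {k, l} t) u * vsum (pert x {k, l} t) v)) = (\<lambda>t. a u v * p u v *
      ((x u v + t * edge_indicator k l u v) ^ n /
        ((vsum x u + t * endpoint_indicator k l u) * (vsum x v + t * endpoint_indicator k l v))))"
    by (simp add: pert_doubleton vsum_pert_doubleton[OF \<open>k \<noteq> l\<close>])
  have prefactor: "a u v * p u v * (x u v ^ n / (vsum x u * vsum x v)) = H * x u v ^ n / x u v"
    using eq uv su sv by (simp add: field_simps)
  have "((\<lambda>t. a u v * p u v * ((x u v + t * edge_indicator k l u v) ^ n /
      ((vsum x u + t * endpoint_indicator k l u) * (vsum x v + t * endpoint_indicator k l v))))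
      has_real_derivative a u v * p u v * (x u v ^ n / (vsum x u * vsum x v) *
        (n * edge_indicator k l u v / x u v
          - endpoint_indicator k l u / vsum x u - endpoint_indicator k l v / vsum x v))) (at 0)"
    using uv su sv by (intro DERIV_cmult has_real_derivative_power_div_mult) auto
  then show ?thesis
    unfolding fun_eq by (simp only: mult.assoc[symmetric] prefactor)
qed

lemma sum_Hs_pert_derivative_terms:
  assumes kl: "x k l > 0"
  shows "(\<Sum>u\<in>UNIV. \<Sum>v\<in>UNIV. 2 * edge_indicator k l u v
           - x u v * endpoint_indicator k l u / vsum x u
           - x u v * endpoint_indicator k l v / vsum x v) = 0"
proof -
  have "k \<noteq> l" using kl by (rule x_pos_imp_neq)
  have row: "(\<Sum>v\<in>UNIV. x u v * endpoint_indicator k l u / vsum x u) = endpoint_indicator k l u" for u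
  proof -
    have "(\<Sum>v\<in>UNIV. x u v * endpoint_indicator k l u / vsum x u)
        = vsum x u * endpoint_indicator k l u / vsum x u"
      by (simp add: vsum_def sum_divide_distrib[symmetric] sum_distrib_right[symmetric])
    also have "\<dots> = endpoint_indicator k l u"
      using vsum_pos_if_x_pos[OF kl] by (auto simp: endpoint_indicator_def)
    finally show ?thesis .
  qed
  have col: "(\<Sum>u\<in>UNIV. \<Sum>v\<in>UNIV. x u v * endpoint_indicator k l v / vsum x v)
      = (\<Sum>v\<in>UNIV. endpoint_indicator k l v)"
    by (subst sum.swap) (simp add: x_sym row)
  show ?thesis
    using sum_edge_indicator[OF \<open>k \<noteq> l\<close>] sum_endpoint_indicator[OF \<open>k \<noteq> l\<close>]
    by (simp add: sum_subtractf sum.distrib sum_distrib_left[symmetric] row col)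
qed

lemma Hs_term_pert_has_derivative:
  assumes kl: "x k l > 0"
  shows "((\<lambda>t. a u v * p u v * (pert x {k, l} t u v)\<^sup>2 /
      (vsum (pert x {k, l} t) u * vsum (pert x {k, l} t) v)) has_real_derivative
      H * (2 * edge_indicator k l u v - x u v * endpoint_indicator k l u / vsum x u
        - x u v * endpoint_indicator k l v / vsum x v)) (at 0)"
proof (cases "x u v > 0")
  case True
  moreover have "H * (x u v)\<^sup>2 / x u v * (2 * edge_indicator k l u v / x u v
      - endpoint_indicator k l u / vsum x u - endpoint_indicator k l v / vsum x v)
      = H * (2 * edge_indicator k l u v - x u v * endpoint_indicator k l u / vsum x u
        - x u v * endpoint_indicator k l v / vsum x v)"
    using True by (simp add: power2_eq_square field_simps)
  ultimately show ?thesis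
    using monomial_pert_has_derivative[OF True kl, of 2] by simp
next
  case False
  then have "x u v = 0" using x_nonneg[of u v] by simp
  moreover have "edge_indicator k l u v = 0"
    using x_pos_if_edge_indicator[OF kl, of u v] \<open>x u v = 0\<close> by auto
  ultimately show ?thesis by (simp add: pert_doubleton)
qed

lemma Hs_pert_has_derivative_zero:
  assumes kl: "x k l > 0"
  shows "((\<lambda>t. Hs a p (pert x {k, l} t)) has_real_derivative 0) (at 0)"
proof -
  define C where "C = {(u, v). a u v * p u v > 0}"
  define R where "R u v = 2 * edge_indicator k l u v - x u v * endpoint_indicator k l u / vsum x u
    - x u v * endpoint_indicator k l v / vsum x v" for u v
  have "((\<lambda>t. Hs a p (pert x {k, l} t)) has_real_derivative (\<Sum>(u, v)\<in>C. H * R u v)) (at 0)"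
    unfolding Hs_def C_def[symmetric] R_def
    by (rule DERIV_sum) (auto intro: Hs_term_pert_has_derivative[OF kl])
  moreover have "(\<Sum>(u, v)\<in>C. H * R u v) = H * (\<Sum>u\<in>UNIV. \<Sum>v\<in>UNIV. R u v)"
  proof -
    have "R u v = 0" if "(u, v) \<notin> C" for u v
    proof -
      have "x u v = 0" using that equilibrium[of u v] x_nonneg[of u v] by (force simp: C_def le_less)
      then show ?thesis using x_pos_if_edge_indicator[OF kl, of u v] by (auto simp: R_def)
    qed
    then have "(\<Sum>(u, v)\<in>C. H * R u v) = (\<Sum>(u, v)\<in>UNIV. H * R u v)"
      by (intro sum.mono_neutral_left) auto
    also have "\<dots> = (\<Sum>u\<in>UNIV. \<Sum>v\<in>UNIV. H * R u v)"
      by (simp only: sum.cartesian_product UNIV_Times_UNIV)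
    finally show ?thesis
      by (simp add: sum_distrib_left)
  qed
  ultimately show ?thesis
    using sum_Hs_pert_derivative_terms[OF kl] by (simp add: R_def)
qed

lemma Jac_entry_support:
  assumes ij: "x i j > 0" and kl: "x k l > 0"
  shows "deriv (\<lambda>t. Fs a p (pert x {k, l} t) i j) 0 = H * (edge_indicator k l i j
           - x i j * (endpoint_indicator k l i / vsum x i + endpoint_indicator k l j / vsum x j))"
proof -
  have ap: "a i j * p i j > 0" using equilibrium[OF ij] by simp
  have yf_pert: "yf a p (pert x {k, l} t) i j = a i j * p i j * pert x {k, l} t i j ^ 1 /
      (vsum (pert x {k, l} t) i * vsum (pert x {k, l} t) j)" for t
    using ap by (simp add: yf_if_ap_pos)
  have "yf a p x i j = a i j * p i j * x i j / (vsum x i * vsum x j)"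
    using ap by (simp add: yf_if_ap_pos)
  also have "\<dots> = H"
    using equilibrium[OF ij] vsum_pos_if_x_pos[OF ij] by (simp add: divide_eq_eq mult.assoc)
  finally have stationary: "yf a p x i j - Hs a p x = 0" by (simp add: Hs_eq)
  have d_pert: "((\<lambda>t. pert x {k, l} t i j) has_real_derivative edge_indicator k l i j) (at 0)"
    unfolding pert_doubleton by (auto intro!: derivative_eq_intros)
  have d_yf: "((\<lambda>t. yf a p (pert x {k, l} t) i j) has_real_derivative H * (edge_indicator k l i j / x i j
      - endpoint_indicator k l i / vsum x i - endpoint_indicator k l j / vsum x j)) (at 0)"
    using monomial_pert_has_derivative[OF ij kl, of 1] ij unfolding yf_pert by simp
  have "((\<lambda>t. Fs a p (pert x {k, l} t) i j) has_real_derivative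
      H * (edge_indicator k l i j / x i j
        - endpoint_indicator k l i / vsum x i - endpoint_indicator k l j / vsum x j) * x i j) (at 0)"
    using DERIV_mult[OF d_pert DERIV_diff[OF d_yf Hs_pert_has_derivative_zero[OF kl]]] stationary
    unfolding Fs_def by simp
  then show ?thesis
    using ij by (simp add: DERIV_imp_deriv field_simps)
qed

lemma Jac_entry_off_support:
  assumes "x i j = 0" "{i, j} \<noteq> f"
  shows "deriv (\<lambda>t. Fs a p (pert x f t) i j) 0 = 0"
  using assms by (simp add: Fs_def pert_def)

end

section \<open>The Rayleigh quotient on the support\<close>

context edge_equilibrium
begin

definition support :: "'v set set" where
  "support = {{u, w} | u w. x u w > 0}"

definition support_vecs :: "(real^('v set)) set" where
  "support_vecs = {y. \<forall>e. e \<notin> support \<longrightarrow> y $ e = 0}"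

definition edge_x :: "'v set \<Rightarrow> real" where
  "edge_x e = x (fst (edge_rep adj e)) (snd (edge_rep adj e))"

definition incident_sum :: "real^('v set) \<Rightarrow> 'v \<Rightarrow> real" where
  "incident_sum y u = (\<Sum>w | x u w > 0. y $ {u, w})"

definition Q_form :: "real^('v set) \<Rightarrow> real" where
  "Q_form y = (\<Sum>u\<in>UNIV. (incident_sum y u)\<^sup>2 / vsum x u)"

definition P_form :: "real^('v set) \<Rightarrow> real" where
  "P_form y = (\<Sum>e\<in>support. (y $ e)\<^sup>2 / edge_x e)"

lemma mem_support_iff: "{u, w} \<in> support \<longleftrightarrow> x u w > 0"
  using x_sym by (auto simp: support_def doubleton_eq_iff)

lemma support_subset_edges: "support \<subseteq> edges adj"
  by (auto simp: support_def edges_def intro: x_pos_imp_adj)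

lemma edge_x_eq: "x u w > 0 \<Longrightarrow> edge_x {u, w} = x u w"
proof -
  assume uw: "x u w > 0"
  obtain i j where r: "edge_rep adj {u, w} = (i, j)" by fastforce
  have "{u, w} \<in> edges adj" using uw by (auto simp: edges_def intro: x_pos_imp_adj)
  then have "{u, w} = {i, j}" using r by (rule edge_rep_eq)
  then have "x i j = x u w" using x_sym by (auto simp: doubleton_eq_iff)
  then show ?thesis by (simp add: edge_x_def r)
qed

lemma edge_x_pos: "e \<in> support \<Longrightarrow> edge_x e > 0"
  by (auto simp: support_def edge_x_eq)

lemma support_vecs_scaleR: "y \<in> support_vecs \<Longrightarrow> c *\<^sub>R y \<in> support_vecs"
  by (simp add: support_vecs_def)

lemma support_vecs_add_axis: "y \<in> support_vecs \<Longrightarrow> e \<in> support \<Longrightarrow> y + c *\<^sub>R axis e 1 \<in> support_vecs"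
  by (auto simp: support_vecs_def axis_def)

lemma incident_sum_scaleR: "incident_sum (c *\<^sub>R y) u = c * incident_sum y u"
  by (simp add: incident_sum_def sum_distrib_left)

lemma incident_sum_diff: "incident_sum (y - z) u = incident_sum y u - incident_sum z u"
  by (simp add: incident_sum_def sum_subtractf)

lemma incident_sum_add_scaleR: "incident_sum (y + t *\<^sub>R z) u = incident_sum y u + t * incident_sum z u"
  by (simp add: incident_sum_def sum.distrib sum_distrib_left)

lemma incident_sum_axis:
  assumes "x k l > 0"
  shows "incident_sum (axis {k, l} 1) u = endpoint_indicator k l u"
proof -
  have "incident_sum (axis {k, l} 1) u = (\<Sum>w | x u w > 0. edge_indicator k l u w)"
    by (simp add: incident_sum_def axis_def edge_indicator_def)
  also have "\<dots> = (\<Sum>w\<in>UNIV. edge_indicator k l u w)"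
    using x_pos_if_edge_indicator[OF assms] by (intro sum.mono_neutral_left) auto
  also have "\<dots> = endpoint_indicator k l u"
    using assms by (intro sum_edge_indicator x_pos_imp_neq)
  finally show ?thesis .
qed

lemma sum_incident_sum_axis:
  assumes "y \<in> support_vecs"
  shows "(\<Sum>f\<in>support. incident_sum (axis f 1) u * y $ f) = incident_sum y u"
proof -
  have "(\<Sum>f\<in>support. incident_sum (axis f 1) u * y $ f)
      = (\<Sum>f\<in>support. \<Sum>w | x u w > 0. if {u, w} = f then y $ f else 0)"
    by (auto simp: incident_sum_def axis_def sum_distrib_right intro!: sum.cong)
  also have "\<dots> = (\<Sum>w | x u w > 0. \<Sum>f\<in>support. if {u, w} = f then y $ f else 0)"
    by (rule sum.swap)
  also have "\<dots> = incident_sum y u"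
    by (simp add: incident_sum_def mem_support_iff)
  finally show ?thesis .
qed

lemma Q_form_nonneg: "Q_form y \<ge> 0"
  unfolding Q_form_def vsum_def by (intro sum_nonneg divide_nonneg_nonneg) (auto simp: x_nonneg)

lemma P_form_nonneg: "P_form y \<ge> 0"
  unfolding P_form_def by (intro sum_nonneg divide_nonneg_nonneg) (auto dest: edge_x_pos)

lemma Q_form_scaleR: "Q_form (c *\<^sub>R y) = c\<^sup>2 * Q_form y"
  by (simp add: Q_form_def incident_sum_scaleR sum_distrib_left power_mult_distrib)

lemma P_form_scaleR: "P_form (c *\<^sub>R y) = c\<^sup>2 * P_form y"
  by (simp add: P_form_def sum_distrib_left power_mult_distrib)

lemma Q_form_add_scaleR:
  "Q_form (y + t *\<^sub>R z) = Q_form y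
     + t * (2 * (\<Sum>u\<in>UNIV. incident_sum y u * incident_sum z u / vsum x u)) + t\<^sup>2 * Q_form z"
proof -
  have "(incident_sum (y + t *\<^sub>R z) u)\<^sup>2 / vsum x u = (incident_sum y u)\<^sup>2 / vsum x u
      + t * (2 * (incident_sum y u * incident_sum z u / vsum x u)) + t\<^sup>2 * ((incident_sum z u)\<^sup>2 / vsum x u)"
    for u
    by (simp add: incident_sum_add_scaleR power2_eq_square add_divide_distrib algebra_simps)
  then show ?thesis by (simp add: Q_form_def sum.distrib sum_distrib_left)
qed

lemma P_form_add_scaleR_axis:
  assumes "e \<in> support"
  shows "P_form (y + t *\<^sub>R axis e 1) = P_form y + t * (2 * (y $ e / edge_x e)) + t\<^sup>2 * (1 / edge_x e)"
proof -
  have "((y + t *\<^sub>R axis e 1) $ f)\<^sup>2 / edge_x f = (y $ f)\<^sup>2 / edge_x f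
      + t * (2 * (if f = e then y $ e / edge_x e else 0)) + t\<^sup>2 * (if f = e then 1 / edge_x e else 0)"
    for f
    by (simp add: axis_def power2_eq_square add_divide_distrib algebra_simps)
  then show ?thesis using assms by (simp add: P_form_def sum.distrib sum_distrib_left[symmetric])
qed

lemma compact_P_form_sphere: "compact {y \<in> support_vecs. P_form y = 1}"
proof -
  have "closed support_vecs"
  proof -
    have "support_vecs = {y. \<forall>e. y $ e \<in> (if e \<in> support then UNIV else {0})}"
      by (auto simp: support_vecs_def)
    then show ?thesis by (simp add: closed_vector_box)
  qed
  moreover have "closed {y. P_form y = 1}"
    unfolding P_form_def by (intro closed_Collect_eq continuous_intros) (auto dest: edge_x_pos)
  ultimately have "closed {y \<in> support_vecs. P_form y = 1}"
    by (simp add: Collect_conj_eq closed_Int)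
  moreover have "bounded {y \<in> support_vecs. P_form y = 1}"
    unfolding bounded_iff
  proof (intro exI ballI)
    fix y assume y: "y \<in> {y \<in> support_vecs. P_form y = 1}"
    have "\<bar>y $ e\<bar> \<le> sqrt (edge_x e)" for e
    proof (cases "e \<in> support")
      case True
      have "(y $ e)\<^sup>2 / edge_x e \<le> P_form y"
        unfolding P_form_def using True
        by (intro member_le_sum divide_nonneg_nonneg) (auto dest: edge_x_pos)
      then have "(y $ e)\<^sup>2 \<le> edge_x e" using y edge_x_pos[OF True] by (simp add: divide_le_eq)
      then show ?thesis using real_sqrt_le_mono by fastforce
    next
      case False
      then show ?thesis using y by (simp add: support_vecs_def edge_x_def x_nonneg)
    qed
    then show "norm y \<le> (\<Sum>e\<in>UNIV. sqrt (edge_x e))"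
      using norm_le_l1_cart[of y] sum_mono by (smt (verit))
  qed
  ultimately show ?thesis by (simp add: compact_eq_bounded_closed)
qed

lemma exists_Q_form_minimizer:
  assumes "support \<noteq> {}"
  obtains y0 where "y0 \<in> support_vecs" "P_form y0 = 1"
    "\<And>y. y \<in> support_vecs \<Longrightarrow> Q_form y0 * P_form y \<le> Q_form y"
proof -
  let ?S = "{y \<in> support_vecs. P_form y = 1}"
  have normalize: "(1 / sqrt (P_form y)) *\<^sub>R y \<in> ?S" if "y \<in> support_vecs" "P_form y > 0" for y
    using that by (simp add: support_vecs_scaleR P_form_scaleR power_divide)
  obtain e where e: "e \<in> support" using assms by blast
  have "(axis e 1 $ f)\<^sup>2 / edge_x f = (if f = e then 1 / edge_x e else 0)" for f
    by (simp add: axis_def)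
  then have "P_form (axis e 1) = 1 / edge_x e" using e by (simp add: P_form_def)
  moreover have "axis e 1 \<in> support_vecs" using e by (simp add: support_vecs_def axis_def)
  ultimately have "?S \<noteq> {}" using normalize edge_x_pos[OF e] by fastforce
  moreover have "continuous_on ?S Q_form"
    unfolding Q_form_def incident_sum_def divide_inverse by (intro continuous_intros)
  ultimately obtain y0 where y0: "y0 \<in> ?S" and min: "\<And>y. y \<in> ?S \<Longrightarrow> Q_form y0 \<le> Q_form y"
    using continuous_attains_inf[OF compact_P_form_sphere] by blast
  have "Q_form y0 * P_form y \<le> Q_form y" if y: "y \<in> support_vecs" for y
  proof (cases "P_form y = 0")
    case True
    then show ?thesis using Q_form_nonneg by simp
  next
    case False
    then have P: "P_form y > 0" using P_form_nonneg[of y] by simp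
    have "Q_form y0 \<le> Q_form ((1 / sqrt (P_form y)) *\<^sub>R y)" by (rule min[OF normalize[OF y P]])
    also have "\<dots> = Q_form y / P_form y" using P by (simp add: Q_form_scaleR power_divide)
    finally show ?thesis using P by (simp add: pos_le_divide_eq)
  qed
  with y0 that show ?thesis by blast
qed

lemma Q_form_minimizer_first_order:
  assumes y0: "y0 \<in> support_vecs" "P_form y0 = 1"
    and min: "\<And>y. y \<in> support_vecs \<Longrightarrow> Q_form y0 * P_form y \<le> Q_form y"
    and ij: "x i j > 0"
  shows "incident_sum y0 i / vsum x i + incident_sum y0 j / vsum x j = Q_form y0 * y0 $ {i, j} / x i j"
proof -
  define e where "e = {i, j}"
  define q where "q = Q_form y0"
  have e: "e \<in> support" using ij by (simp add: e_def mem_support_iff)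
  have cross: "(\<Sum>u\<in>UNIV. incident_sum y0 u * incident_sum (axis e 1) u / vsum x u)
      = incident_sum y0 i / vsum x i + incident_sum y0 j / vsum x j"
  proof -
    have "i \<noteq> j" using ij by (rule x_pos_imp_neq)
    then have "incident_sum y0 u * incident_sum (axis e 1) u / vsum x u
        = (if u = i then incident_sum y0 i / vsum x i else 0) + (if u = j then incident_sum y0 j / vsum x j else 0)"
      for u
      by (auto simp: e_def incident_sum_axis[OF ij] endpoint_indicator_def)
    then show ?thesis by (simp add: sum.distrib)
  qed
  have "t * (2 * (incident_sum y0 i / vsum x i + incident_sum y0 j / vsum x j - q * (y0 $ e / x i j)))
      + t\<^sup>2 * (Q_form (axis e 1) - q * (1 / x i j)) \<ge> 0" for t
    using min[OF support_vecs_add_axis[OF y0(1) e, of t]]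
    unfolding Q_form_add_scaleR P_form_add_scaleR_axis[OF e] y0(2) cross edge_x_eq[OF ij, folded e_def]
    by (simp add: q_def algebra_simps)
  then have "2 * (incident_sum y0 i / vsum x i + incident_sum y0 j / vsum x j - q * (y0 $ e / x i j)) = 0"
    by (rule linear_coeff_zero_if_quadratic_nonneg)
  then show ?thesis by (simp add: e_def q_def)
qed

lemma Jac_mult_support_entry:
  assumes e: "e \<in> edges adj" and r: "edge_rep adj e = (i, j)" and ij: "x i j > 0" and f: "f \<in> support"
  shows "Jac adj a p x e f * y $ f = H * (if f = e then y $ f else 0)
           - H * x i j / vsum x i * (incident_sum (axis f 1) i * y $ f)
           - H * x i j / vsum x j * (incident_sum (axis f 1) j * y $ f)"
proof -
  obtain k l where fkl: "f = {k, l}" and kl: "x k l > 0" using f by (auto simp: support_def)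
  have "edge_indicator k l i j = (if f = e then 1 else 0)"
    using edge_rep_eq[OF e r] by (auto simp: edge_indicator_def fkl)
  then have J: "Jac adj a p x e f = H * ((if f = e then 1 else 0)
      - x i j * (incident_sum (axis f 1) i / vsum x i + incident_sum (axis f 1) j / vsum x j))"
    using Jac_entry_support[OF ij kl] by (simp add: Jac_def r fkl incident_sum_axis[OF kl])
  show ?thesis unfolding J by (cases "f = e") (simp_all add: divide_inverse algebra_simps)
qed

lemma Jac_mult_support_vec:
  assumes y: "y \<in> support_vecs" and e: "e \<in> edges adj" and r: "edge_rep adj e = (i, j)"
  shows "(\<Sum>f\<in>edges adj. Jac adj a p x e f * y $ f)
           = H * (y $ e - x i j * (incident_sum y i / vsum x i + incident_sum y j / vsum x j))"
proof -
  have eij: "e = {i, j}" using e r by (rule edge_rep_eq)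
  have "(\<Sum>f\<in>edges adj. Jac adj a p x e f * y $ f) = (\<Sum>f\<in>support. Jac adj a p x e f * y $ f)"
    using y support_subset_edges by (intro sum.mono_neutral_right) (auto simp: support_vecs_def)
  also have "\<dots> = H * (y $ e - x i j * (incident_sum y i / vsum x i + incident_sum y j / vsum x j))"
  proof (cases "x i j > 0")
    case True
    have "(\<Sum>f\<in>support. Jac adj a p x e f * y $ f) = (\<Sum>f\<in>support. H * (if f = e then y $ f else 0)
        - H * x i j / vsum x i * (incident_sum (axis f 1) i * y $ f)
        - H * x i j / vsum x j * (incident_sum (axis f 1) j * y $ f))"
      by (rule sum.cong[OF refl Jac_mult_support_entry[OF e r True]])
    also have "\<dots> = H * (\<Sum>f\<in>support. if f = e then y $ f else 0)
        - H * x i j / vsum x i * incident_sum y i - H * x i j / vsum x j * incident_sum y j"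
      by (simp only: sum_subtractf sum_distrib_left[symmetric] sum_incident_sum_axis[OF y])
    also have "(\<Sum>f\<in>support. if f = e then y $ f else 0) = y $ e"
      using True by (simp add: eij mem_support_iff)
    finally show ?thesis by (simp add: algebra_simps)
  next
    case False
    then have xij: "x i j = 0" and e_out: "e \<notin> support"
      using x_nonneg[of i j] by (auto simp: eij mem_support_iff)
    have "Jac adj a p x e f = 0" if "f \<in> support" for f
      unfolding Jac_def r prod.sel using that e_out eij by (intro Jac_entry_off_support[OF xij]) auto
    then show ?thesis
      using y e_out xij by (auto simp: support_vecs_def intro!: sum.neutral)
  qed
  finally show ?thesis .
qed

lemma is_eigenvalue_Q_form_minimizer:
  assumes y0: "y0 \<in> support_vecs" "P_form y0 = 1"
    and min: "\<And>y. y \<in> support_vecs \<Longrightarrow> Q_form y0 * P_form y \<le> Q_form y"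
  shows "is_eigenvalue (edges adj) (Jac adj a p x) (complex_of_real (H * (1 - Q_form y0)))"
proof -
  have "(\<Sum>f\<in>edges adj. Jac adj a p x e f * y0 $ f) = H * (1 - Q_form y0) * y0 $ e"
    if e: "e \<in> edges adj" for e
  proof -
    obtain i j where r: "edge_rep adj e = (i, j)" by fastforce
    have "e = {i, j}" using e r by (rule edge_rep_eq)
    then have first_order:
      "x i j * (incident_sum y0 i / vsum x i + incident_sum y0 j / vsum x j) = Q_form y0 * y0 $ e"
      using Q_form_minimizer_first_order[OF y0 min, of i j] y0(1) x_nonneg[of i j]
      by (cases "x i j > 0") (auto simp: mem_support_iff support_vecs_def)
    have "(\<Sum>f\<in>edges adj. Jac adj a p x e f * y0 $ f)
        = H * (y0 $ e - x i j * (incident_sum y0 i / vsum x i + incident_sum y0 j / vsum x j))"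
      by (rule Jac_mult_support_vec[OF y0(1) e r])
    also have "\<dots> = H * (1 - Q_form y0) * y0 $ e" by (simp only: first_order) (simp add: algebra_simps)
    finally show ?thesis .
  qed
  moreover have "\<exists>e\<in>edges adj. y0 $ e \<noteq> 0"
  proof (rule ccontr)
    assume "\<not> ?thesis"
    then have "P_form y0 = 0" using support_subset_edges by (auto simp: P_form_def intro!: sum.neutral)
    with y0(2) show False by simp
  qed
  ultimately show ?thesis
    unfolding is_eigenvalue_def
    by (intro exI[of _ "\<lambda>e. complex_of_real (y0 $ e)"]) (simp flip: of_real_sum of_real_mult)
qed

end

section \<open>Stable equilibria\<close>

locale stable_edge_equilibrium = edge_equilibrium +
  assumes eigenvalue_Re_nonpos: "is_eigenvalue (edges adj) (Jac adj a p x) \<mu> \<Longrightarrow> Re \<mu> \<le> 0"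
begin

lemma P_form_le_Q_form:
  assumes y: "y \<in> support_vecs"
  shows "P_form y \<le> Q_form y"
proof (cases "support = {}")
  case True
  then show ?thesis using Q_form_nonneg by (simp add: P_form_def)
next
  case False
  then obtain y0 where y0: "y0 \<in> support_vecs" "P_form y0 = 1"
    and min: "\<And>y. y \<in> support_vecs \<Longrightarrow> Q_form y0 * P_form y \<le> Q_form y"
    using exists_Q_form_minimizer by blast
  have "Re (complex_of_real (H * (1 - Q_form y0))) \<le> 0"
    by (rule eigenvalue_Re_nonpos[OF is_eigenvalue_Q_form_minimizer[OF y0 min]])
  then have "1 \<le> Q_form y0" using H_pos by (simp add: mult_le_0_iff)
  then show ?thesis
    using min[OF y] mult_right_mono[of 1 "Q_form y0" "P_form y"] P_form_nonneg[of y] by simp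
qed

text \<open>The test vector e_uw - e_uw' has Q/P < 1 unless w has no support edge besides {u, w}.\<close>

lemma vsum_eq_if_two_support_neighbours:
  assumes uw: "x u w > 0" and uw': "x u w' > 0" and "w \<noteq> w'"
  shows "vsum x w = x u w"
proof (rule ccontr)
  assume "vsum x w \<noteq> x u w"
  then have lt: "x u w < vsum x w" using x_le_vsum[of w u] x_sym[of u w] by simp
  have "u \<noteq> w" "u \<noteq> w'" using uw uw' by (auto dest: x_pos_imp_neq)
  then have edges_neq: "{u, w} \<noteq> {u, w'}" using \<open>w \<noteq> w'\<close> by (auto simp: doubleton_eq_iff)
  define z where "z = axis {u, w} 1 - axis {u, w'} (1::real)"
  have "z \<in> support_vecs"
    using uw uw' by (auto simp: z_def support_vecs_def axis_def mem_support_iff)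
  have "(incident_sum z t)\<^sup>2 / vsum x t
      = (if t = w then 1 / vsum x w else 0) + (if t = w' then 1 / vsum x w' else 0)" for t
    using \<open>u \<noteq> w\<close> \<open>u \<noteq> w'\<close> \<open>w \<noteq> w'\<close>
    by (simp add: z_def incident_sum_diff incident_sum_axis[OF uw] incident_sum_axis[OF uw']
        endpoint_indicator_def)
  then have Q: "Q_form z = 1 / vsum x w + 1 / vsum x w'"
    by (simp add: Q_form_def sum.distrib)
  have "(z $ e)\<^sup>2 / edge_x e
      = (if e = {u, w} then 1 / x u w else 0) + (if e = {u, w'} then 1 / x u w' else 0)" for e
    using edges_neq by (auto simp: z_def axis_def edge_x_eq[OF uw] edge_x_eq[OF uw'])
  then have P: "P_form z = 1 / x u w + 1 / x u w'"
    using uw uw' by (simp add: P_form_def sum.distrib mem_support_iff)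
  have "1 / vsum x w < 1 / x u w" using lt uw by (simp add: frac_less2)
  moreover have "1 / vsum x w' \<le> 1 / x u w'"
    using uw' x_le_vsum[of w' u] x_sym[of u w'] by (simp add: frac_le)
  ultimately have "Q_form z < P_form z" unfolding Q P by simp
  with P_form_le_Q_form[OF \<open>z \<in> support_vecs\<close>] show False by simp
qed

lemma ap_eq_if_support_path:
  assumes ij: "x i j > 0" and jl: "x j l > 0"
  shows "a i j * p i j = a j l * p j l"
proof (cases "i = l")
  case True
  then show ?thesis using ap_sym by simp
next
  case False
  have ji: "x j i > 0" using ij x_sym by simp
  have "vsum x i = x j i" using ji jl False by (rule vsum_eq_if_two_support_neighbours)
  then have "a j i * p j i * x j i = H * vsum x j * x j i" using equilibrium[OF ji] by simp
  then have "a j i * p j i = H * vsum x j" using ji by simp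
  moreover have "vsum x l = x j l"
    by (rule vsum_eq_if_two_support_neighbours[OF jl ji]) (use False in auto)
  then have "a j l * p j l * x j l = H * vsum x j * x j l" using equilibrium[OF jl] by simp
  then have "a j l * p j l = H * vsum x j" using jl by simp
  ultimately show ?thesis using ap_sym[of i j] by simp
qed

lemma ap_eq_if_Gx_conn:
  assumes "Gx_conn x j k" and ij: "x i j > 0"
  shows "x k l > 0 \<Longrightarrow> a i j * p i j = a k l * p k l"
  using assms(1) unfolding Gx_conn_def
proof (induction arbitrary: l rule: rtranclp_induct)
  case base
  then show ?case using ap_eq_if_support_path[OF ij] by simp
next
  case (step m k)
  have "a i j * p i j = a m k * p m k" using step.IH step.hyps(2) by simp
  also have "\<dots> = a k l * p k l" using ap_eq_if_support_path[OF step.hyps(2) step.prems] .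
  finally show ?case .
qed

end

lemma in_Delta_obtains_weighted_support_edge:
  assumes D: "in_Delta adj a p h1 x" and h1: "0 < h1"
  obtains i j where "a i j * p i j > 0" "x i j > 0"
proof -
  have "(\<Sum>(i, j)\<in>{(i, j). a i j * p i j > 0}. x i j) > 0" using D h1 by (simp add: in_Delta_def)
  then obtain q where "q \<in> {(i, j). a i j * p i j > 0}" "(case q of (i, j) \<Rightarrow> x i j) \<noteq> 0"
    by (metis (no_types, lifting) less_irrefl sum.neutral)
  then show ?thesis using that D by (auto simp: less_le in_Delta_def)
qed

lemma edge_equilibrium_if_in_Gamma0:
  fixes adj :: "'v::finite \<Rightarrow> 'v \<Rightarrow> bool" and a p x :: "'v \<Rightarrow> 'v \<Rightarrow> real"
  assumes adj_irrefl: "\<And>i. \<not> adj i i"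
    and a_sym: "\<And>i j. a i j = a j i" and a_nonneg: "\<And>i j. a i j \<ge> 0"
    and p_sym: "\<And>i j. p i j = p j i" and p_nonneg: "\<And>i j. p i j \<ge> 0"
    and h1: "0 < h1" and G0: "in_Gamma0 adj a p h1 x"
  shows "edge_equilibrium adj a p x (Hf a p x)"
proof -
  have D: "in_Delta adj a p h1 x" and F0: "\<And>i j. Ff a p x i j = 0"
    using G0 by (auto simp: in_Gamma0_def)
  have x_nonneg: "\<And>i j. x i j \<ge> 0" using D by (simp add: in_Delta_def)
  have vsum_pos': "vsum x i > 0 \<and> vsum x j > 0" if "x i j > 0" for i j
    using that member_le_sum[of j UNIV "x i"] member_le_sum[of i UNIV "x j"] D x_nonneg
    by (fastforce simp: vsum_def in_Delta_def)
  have yf_eq: "yf a p x i j = Hf a p x" if "x i j > 0" for i j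
    using F0[of i j] that by (simp add: Ff_def)
  have yf_pos: "yf a p x i j > 0" if "x i j > 0" "a i j * p i j > 0" for i j
    using that vsum_pos'[OF that(1)] by (simp add: yf_if_ap_pos)
  obtain i j where "a i j * p i j > 0" "x i j > 0"
    using in_Delta_obtains_weighted_support_edge[OF D h1] .
  then have H_pos: "Hf a p x > 0" using yf_eq yf_pos by force
  have "a i j * p i j > 0 \<and> a i j * p i j * x i j = Hf a p x * vsum x i * vsum x j" if "x i j > 0" for i j
  proof -
    have "a i j * p i j \<noteq> 0" using yf_eq[OF that] H_pos by (auto simp: yf_def)
    then have "a i j * p i j > 0" using a_nonneg p_nonneg by (simp add: less_le)
    moreover have "a i j * p i j * x i j / (vsum x i * vsum x j) = Hf a p x"
      using yf_eq[OF that] calculation by (simp add: yf_if_ap_pos)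
    ultimately show ?thesis using vsum_pos'[OF that] by (simp add: divide_eq_eq mult.assoc)
  qed
  then show ?thesis
    using D adj_irrefl a_sym p_sym H_pos
    by unfold_locales (auto simp: in_Delta_def)
qed

theorem lemma10:
  fixes adj :: "'v::finite \<Rightarrow> 'v \<Rightarrow> bool"
    and a p x :: "'v \<Rightarrow> 'v \<Rightarrow> real" and h1 :: real
  assumes adj_sym: "\<And>i j. adj i j \<Longrightarrow> adj j i"
    and adj_irrefl: "\<And>i. \<not> adj i i"
    and a_sym: "\<And>i j. a i j = a j i" and a_nonneg: "\<And>i j. a i j \<ge> 0"
    and a_adj: "\<And>i j. a i j > 0 \<Longrightarrow> adj i j"
    and p_sym: "\<And>i j. p i j = p j i" and p_range: "\<And>i j. 0 \<le> p i j \<and> p i j \<le> 1"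
    and p_adj: "\<And>i j. \<not> adj i j \<Longrightarrow> p i j = 0"
    and ap_pos: "\<exists>i j. a i j * p i j > 0"
    and h1: "0 < h1" "h1 \<le> 1"
    and stable: "in_Gammas adj a p h1 x"
  shows "\<forall>i j k l. Gx_conn x i j \<and> Gx_conn x i k \<and> Gx_conn x i l \<and> x i j > 0 \<and> x k l > 0
           \<longrightarrow> a i j * p i j = a k l * p k l"
proof -
  have "edge_equilibrium adj a p x (Hf a p x)"
    using stable p_range
    by (intro edge_equilibrium_if_in_Gamma0[OF adj_irrefl a_sym a_nonneg p_sym _ h1(1)])
      (auto simp: in_Gammas_def)
  then interpret stable_edge_equilibrium adj a p x "Hf a p x"
    using stable by (simp add: stable_edge_equilibrium_def stable_edge_equilibrium_axioms_def in_Gammas_def)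
  show ?thesis
  proof (intro allI impI)
    fix i j k l
    assume h: "Gx_conn x i j \<and> Gx_conn x i k \<and> Gx_conn x i l \<and> x i j > 0 \<and> x k l > 0"
    then have "Gx_conn x j k"
      using x_sym[of i j] by (auto simp: Gx_conn_def intro: converse_rtranclp_into_rtranclp)
    then have "a j i * p j i = a k l * p k l"
      using h x_sym[of i j] by (intro ap_eq_if_Gx_conn) auto
    then show "a i j * p i j = a k l * p k l" using ap_sym[of i j] by simp
  qed
qed

end
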